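(* Let $(M,g)$ be a complete Riemannian manifold and let $V\in L^\infty_{\rm loc}(M)$ with $V\ge1$ a.e., $\operatorname{ess\,lim}_{d(p,p_0)\to\infty}V(p)=\infty$, satisfying the doubling condition. Then for every $\epsilon>0$ there exists $A=A(\epsilon)>0$ such that for all $t\in(0,2]$, $$\int_{\{x\in M:V(x)\ge A/t\}}e^{-tV(x)}\,dx\le\epsilon\int_M e^{-tV(x)}\,dx.$$
   Context: $d$ is the Riemannian distance, $p_0\in M$ fixed, $dx$ and $|\cdot|$ the Riemannian measure. $\operatorname{ess\,lim}V=\infty$ means: for every $L>0$ there is $R>0$ with $V(p)\ge L$ for a.e. $p$ with $d(p,p_0)\ge R$. Doubling condition: with $\sigma(\lambda)=|\{x:V(x)\le\lambda\}|$, there are $C_V,\lambda_0>0$ with $\sigma(2\lambda)\le C_V\sigma(\lambda)$ for all $\lambda\ge\lambda_0$. *)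

theory Defs
  imports "HOL-Analysis.Analysis"
begin

definition sublevel_measure :: "'a measure \<Rightarrow> ('a \<Rightarrow> real) \<Rightarrow> real \<Rightarrow> ennreal" where
  "sublevel_measure M V lam = emeasure M {x \<in> space M. V x \<le> lam}"

definition doubling_potential :: "'a measure \<Rightarrow> ('a \<Rightarrow> real) \<Rightarrow> bool" where
  "doubling_potential M V \<longleftrightarrow>
     (\<exists>C\<^sub>V lam0. C\<^sub>V > 0 \<and> lam0 > 0 \<and>
        (\<forall>lam\<ge>lam0. sublevel_measure M V (2 * lam) \<le> ennreal C\<^sub>V * sublevel_measure M V lam))"

definition Linf_loc :: "('a::topological_space) measure \<Rightarrow> ('a \<Rightarrow> real) \<Rightarrow> bool" where
  "Linf_loc M V \<longleftrightarrow> V \<in> borel_measurable M \<and>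
     (\<forall>K. compact K \<longrightarrow> (\<exists>C. AE x in M. x \<in> K \<longrightarrow> \<bar>V x\<bar> \<le> C))"

definition ess_lim_infinity :: "('a::metric_space) measure \<Rightarrow> 'a \<Rightarrow> ('a \<Rightarrow> real) \<Rightarrow> bool" where
  "ess_lim_infinity M p\<^sub>0 V \<longleftrightarrow>
     (\<forall>L>0. \<exists>R>0. AE p in M. dist p p\<^sub>0 \<ge> R \<longrightarrow> V p \<ge> L)"

end

theory Submission
  imports Defs
begin

text \<open>
  Let sigma be the distribution function of V, with doubling constants C and l0. Put l = 2 l0
  and a = l / t, so that a >= l0 whenever t <= 2. Cut the superlevel set {V >= 2^j a} into the
  dyadic shells 2^k a <= V < 2^(k+1) a, k >= j: on such a shell exp(-tV) <= exp(-2^k l), and its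
  measure is at most sigma(2^(k+1) a) <= C^(k+1) sigma(a) by iterated doubling. The series
  sum_k C^(k+1) exp(-2^k l) converges, so its tail from some j on is below eps exp(-l), while
  exp(-l) sigma(a) is at most the integral of exp(-tV) because tV <= l on {V <= a}. Hence
  A = 2^j l works.
\<close>

lemma exists_dyadic_shell:
  fixes b v :: real
  assumes "b > 0" and "b \<le> v"
  shows "\<exists>n. 2^n * b \<le> v \<and> v < 2^(n+1) * b"
proof -
  define k where "k = \<lfloor>log 2 (v / b)\<rfloor>"
  have "k \<ge> 0" using assms by (simp add: k_def)
  then have k_real: "real_of_int k = real (nat k)" by simp
  have "2 powr k \<le> v / b \<and> v / b < 2 powr (k + 1)"
    using assms floor_log_eq_powr_iff[of "v / b" 2 k] by (simp add: k_def)
  then have "2^nat k \<le> v / b \<and> v / b < 2^(nat k + 1)"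
    by (simp add: k_real powr_add powr_realpow)
  then show ?thesis using assms by (auto simp: field_simps)
qed

lemma doubling_power_le:
  fixes f :: "real \<Rightarrow> ennreal"
  assumes C: "C \<ge> 0" and l0: "l0 \<ge> 0"
    and doubling: "\<And>x. x \<ge> l0 \<Longrightarrow> f (2 * x) \<le> ennreal C * f x"
    and a: "a \<ge> l0"
  shows "f (2^m * a) \<le> ennreal (C^m) * f a"
proof (induction m)
  case 0
  then show ?case by simp
next
  case (Suc m)
  have "1 * a \<le> 2^m * a" using a l0 by (intro mult_right_mono) simp_all
  then have "f (2 * (2^m * a)) \<le> ennreal C * f (2^m * a)" using a by (intro doubling) simp
  also have "\<dots> \<le> ennreal C * (ennreal (C^m) * f a)" using Suc by (intro mult_left_mono) auto
  also have "\<dots> = ennreal (C^Suc m) * f a" using C by (simp add: ennreal_mult mult.assoc)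
  finally show ?case by (simp add: mult.assoc)
qed

lemma summable_power_mult_exp_neg_two_power:
  fixes C l :: real
  assumes l: "l > 0"
  shows "summable (\<lambda>k. C^k * exp (- (2^k * l)))"
proof -
  obtain N :: nat where N: "ln (2 * \<bar>C\<bar> + 1) < real N * l"
    using reals_Archimedean3[OF l] by blast
  show ?thesis
  proof (rule summable_ratio_test[of "1/2" N])
    fix n assume "n \<ge> N"
    moreover have "real n < 2^n" using of_nat_less_two_power[of n, where ?'a=real] by simp
    ultimately have "real N \<le> 2^n" by linarith
    then have "real N * l \<le> 2^n * l"
      using l by (intro mult_right_mono) auto
    then have "ln (2 * \<bar>C\<bar> + 1) \<le> 2^n * l" using N by linarith
    then have "exp (ln (2 * \<bar>C\<bar> + 1)) \<le> exp (2^n * l)" by (simp only: exp_le_cancel_iff)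
    then have "2 * \<bar>C\<bar> + 1 \<le> exp (2^n * l)"
      by (simp add: exp_ln add_pos_nonneg)
    then have "\<bar>C\<bar> * exp (- (2^n * l)) \<le> 1/2"
      by (simp add: exp_minus field_simps)
    then have "\<bar>C\<bar> * exp (- (2^n * l)) * (\<bar>C\<bar>^n * exp (- (2^n * l))) \<le> 1/2 * (\<bar>C\<bar>^n * exp (- (2^n * l)))"
      by (intro mult_right_mono) auto
    moreover have "exp (- (2^Suc n * l)) = exp (- (2^n * l)) * exp (- (2^n * l))"
      by (simp add: exp_add[symmetric])
    ultimately show "norm (C^Suc n * exp (- (2^Suc n * l))) \<le> 1/2 * norm (C^n * exp (- (2^n * l)))"
      by (simp add: abs_mult power_abs mult_ac)
  qed simp
qed

lemma exp_sublevel_le_nn_integral_exp: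
  assumes V: "V \<in> borel_measurable M" and t: "t \<ge> 0"
  shows "ennreal (exp (- (t * a))) * sublevel_measure M V a \<le> (\<integral>\<^sup>+ x. ennreal (exp (- t * V x)) \<partial>M)"
proof -
  have "{x \<in> space M. V x \<le> a} \<in> sets M" using V by measurable
  then have "ennreal (exp (- (t * a))) * sublevel_measure M V a
      = (\<integral>\<^sup>+ x. ennreal (exp (- (t * a))) * indicator {x \<in> space M. V x \<le> a} x \<partial>M)"
    unfolding sublevel_measure_def by (simp add: nn_integral_cmult_indicator)
  also have "\<dots> \<le> (\<integral>\<^sup>+ x. ennreal (exp (- t * V x)) \<partial>M)"
  proof (intro nn_integral_mono)
    fix x
    have "V x \<le> a \<Longrightarrow> t * V x \<le> t * a" using t by (rule mult_left_mono[rotated])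
    then show "ennreal (exp (- (t * a))) * indicator {x \<in> space M. V x \<le> a} x \<le> ennreal (exp (- t * V x))"
      by (auto simp: indicator_def intro: ennreal_leI)
  qed
  finally show ?thesis .
qed

lemma nn_integral_exp_superlevel_le_dyadic_sum:
  assumes V: "V \<in> borel_measurable M" and b: "b > 0" and t: "t \<ge> 0"
  shows "(\<integral>\<^sup>+ x. ennreal (exp (- t * V x)) * indicator {x. V x \<ge> b} x \<partial>M)
    \<le> (\<Sum>n. ennreal (exp (- (t * (2^n * b)))) * sublevel_measure M V (2^(n+1) * b))"
proof -
  define S where "S n = (\<lambda>x. ennreal (exp (- (t * (2^n * b)))) * indicator {x \<in> space M. V x \<le> 2^(n+1) * b} x)"
    for n
  have sublevel_sets: "{x \<in> space M. V x \<le> c} \<in> sets M" for c using V by measurable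
  have "(\<integral>\<^sup>+ x. ennreal (exp (- t * V x)) * indicator {x. V x \<ge> b} x \<partial>M) \<le> (\<integral>\<^sup>+ x. (\<Sum>n. S n x) \<partial>M)"
  proof (intro nn_integral_mono)
    fix x assume x: "x \<in> space M"
    show "ennreal (exp (- t * V x)) * indicator {x. V x \<ge> b} x \<le> (\<Sum>n. S n x)"
    proof (cases "V x \<ge> b")
      case True
      then obtain n where lo: "2^n * b \<le> V x" and hi: "V x < 2^(n+1) * b"
        using exists_dyadic_shell b by blast
      have "t * (2^n * b) \<le> t * V x" using lo t by (rule mult_left_mono)
      then have "ennreal (exp (- t * V x)) * indicator {x. V x \<ge> b} x \<le> S n x"
        using True hi x by (simp add: S_def ennreal_leI)
      also have "\<dots> \<le> (\<Sum>n. S n x)" using sum_le_suminf[of "\<lambda>k. S k x" "{n}"] by simp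
      finally show ?thesis .
    qed simp
  qed
  also have "\<dots> = (\<Sum>n. integral\<^sup>N M (S n))"
    using sublevel_sets by (intro nn_integral_suminf) (simp add: S_def)
  also have "\<dots> = (\<Sum>n. ennreal (exp (- (t * (2^n * b)))) * sublevel_measure M V (2^(n+1) * b))"
    using sublevel_sets by (simp add: S_def sublevel_measure_def nn_integral_cmult_indicator)
  finally show ?thesis .
qed

lemma nn_integral_exp_superlevel_le_doubling:
  assumes V: "V \<in> borel_measurable M" and C: "C \<ge> 0" and l0: "l0 > 0"
    and doubling: "\<And>lam. lam \<ge> l0 \<Longrightarrow> sublevel_measure M V (2 * lam) \<le> ennreal C * sublevel_measure M V lam"
    and t: "t > 0" and a: "a \<ge> l0"
  shows "(\<integral>\<^sup>+ x. ennreal (exp (- t * V x)) * indicator {x. V x \<ge> 2^j * a} x \<partial>M)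
    \<le> ennreal (\<Sum>n. C^(n+j+1) * exp (- (2^(n+j) * (t * a)))) * sublevel_measure M V a"
proof -
  let ?\<sigma> = "sublevel_measure M V"
  have "a > 0" using a l0 by linarith
  have summable: "summable (\<lambda>n. C^(n+j+1) * exp (- (2^(n+j) * (t * a))))"
  proof -
    have "summable (\<lambda>k. C * (C^k * exp (- (2^k * (t * a)))))"
      using summable_power_mult_exp_neg_two_power[of "t * a" C] t \<open>a > 0\<close> by (intro summable_mult) simp
    then show ?thesis by (subst summable_iff_shift[where k = j]) (simp add: mult.assoc)
  qed
  have "(\<integral>\<^sup>+ x. ennreal (exp (- t * V x)) * indicator {x. V x \<ge> 2^j * a} x \<partial>M)
      \<le> (\<Sum>n. ennreal (exp (- (t * (2^n * (2^j * a))))) * ?\<sigma> (2^(n+1) * (2^j * a)))"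
    using V t \<open>a > 0\<close> by (intro nn_integral_exp_superlevel_le_dyadic_sum) auto
  also have "\<dots> \<le> (\<Sum>n. ennreal (exp (- (t * (2^n * (2^j * a))))) * (ennreal (C^(n+j+1)) * ?\<sigma> a))"
  proof (intro suminf_le mult_left_mono)
    fix n
    have shell: "2^(n+1) * (2^j * a) = 2^(n+j+1) * a" by (simp add: power_add)
    show "?\<sigma> (2^(n+1) * (2^j * a)) \<le> ennreal (C^(n+j+1)) * ?\<sigma> a"
      unfolding shell by (rule doubling_power_le[where f = ?\<sigma>, OF C less_imp_le[OF l0] doubling a])
  qed auto
  also have "\<dots> = (\<Sum>n. ennreal (C^(n+j+1) * exp (- (2^(n+j) * (t * a)))) * ?\<sigma> a)"
  proof (rule suminf_cong)
    fix n
    have exponent: "t * (2^n * (2^j * a)) = 2^(n+j) * (t * a)" by (simp add: power_add)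
    have product: "ennreal (C^(n+j+1) * exp (- (2^(n+j) * (t * a))))
        = ennreal (C^(n+j+1)) * ennreal (exp (- (2^(n+j) * (t * a))))"
      using C by (intro ennreal_mult) auto
    show "ennreal (exp (- (t * (2^n * (2^j * a))))) * (ennreal (C^(n+j+1)) * ?\<sigma> a)
        = ennreal (C^(n+j+1) * exp (- (2^(n+j) * (t * a)))) * ?\<sigma> a"
      unfolding exponent product mult.assoc by (rule mult.left_commute)
  qed
  also have "\<dots> = (\<Sum>n. ennreal (C^(n+j+1) * exp (- (2^(n+j) * (t * a))))) * ?\<sigma> a"
    by (rule ennreal_suminf_multc)
  also have "\<dots> = ennreal (\<Sum>n. C^(n+j+1) * exp (- (2^(n+j) * (t * a)))) * ?\<sigma> a"
    using C by (subst suminf_ennreal2[OF _ summable]) auto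
  finally show ?thesis .
qed

lemma doubling_potential_exp_superlevel_small:
  assumes V: "V \<in> borel_measurable M" and V_doubling: "doubling_potential M V" and "\<epsilon> > 0"
  shows "\<exists>A>0. \<forall>t\<in>{0<..2}.
           (\<integral>\<^sup>+ x. ennreal (exp (- t * V x)) * indicator {x. V x \<ge> A / t} x \<partial>M)
             \<le> ennreal \<epsilon> * (\<integral>\<^sup>+ x. ennreal (exp (- t * V x)) \<partial>M)"
proof -
  obtain C l0 where C: "C > 0" and l0: "l0 > 0"
    and doubling: "\<And>lam. lam \<ge> l0 \<Longrightarrow> sublevel_measure M V (2 * lam) \<le> ennreal C * sublevel_measure M V lam"
    using V_doubling unfolding doubling_potential_def by blast
  define l where "l = 2 * l0"
  have "summable (\<lambda>k. C * (C^k * exp (- (2^k * l))))"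
    using summable_power_mult_exp_neg_two_power l0 by (intro summable_mult) (simp add: l_def)
  then have "summable (\<lambda>k. C^(k+1) * exp (- (2^k * l)))" by (simp add: mult.assoc)
  moreover have "\<epsilon> * exp (- l) > 0" using \<open>\<epsilon> > 0\<close> by simp
  ultimately obtain j where tail: "norm (\<Sum>n. C^(n+j+1) * exp (- (2^(n+j) * l))) < \<epsilon> * exp (- l)"
    using suminf_exist_split by blast
  show ?thesis
  proof (intro exI[of _ "2^j * l"] conjI ballI)
    fix t :: real assume "t \<in> {0<..2}"
    then have t: "t > 0" "t \<le> 2" by auto
    define a where "a = l / t"
    have "a \<ge> l0" "t * a = l" "2^j * l / t = 2^j * a"
      using t l0 by (simp_all add: a_def l_def field_simps)
    then have "(\<integral>\<^sup>+ x. ennreal (exp (- t * V x)) * indicator {x. V x \<ge> 2^j * l / t} x \<partial>M)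
        \<le> ennreal (\<Sum>n. C^(n+j+1) * exp (- (2^(n+j) * l))) * sublevel_measure M V a"
      using nn_integral_exp_superlevel_le_doubling[OF V less_imp_le[OF C] l0 doubling t(1), of a j]
      by (simp only:)
    also have "\<dots> \<le> ennreal (\<epsilon> * exp (- (t * a))) * sublevel_measure M V a"
      using tail \<open>t * a = l\<close> by (intro mult_right_mono ennreal_leI) (auto simp: mult_ac)
    also have "\<dots> \<le> ennreal \<epsilon> * (\<integral>\<^sup>+ x. ennreal (exp (- t * V x)) \<partial>M)"
      using exp_sublevel_le_nn_integral_exp[OF V less_imp_le[OF t(1)], of a] \<open>\<epsilon> > 0\<close>
      by (simp add: ennreal_mult mult.assoc mult_left_mono)
    finally show "(\<integral>\<^sup>+ x. ennreal (exp (- t * V x)) * indicator {x. V x \<ge> 2^j * l / t} x \<partial>M)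
        \<le> ennreal \<epsilon> * (\<integral>\<^sup>+ x. ennreal (exp (- t * V x)) \<partial>M)" .
  qed (use l0 in \<open>simp add: l_def\<close>)
qed

theorem proposition3p5:
  fixes M :: "('a::heine_borel) measure" and V :: "'a \<Rightarrow> real" and p\<^sub>0 :: 'a
  assumes sets_M: "sets M = sets borel"
    and compact_finite: "\<And>K. compact K \<Longrightarrow> emeasure M K < \<infinity>"
    and open_pos: "\<And>U. open U \<Longrightarrow> U \<noteq> {} \<Longrightarrow> emeasure M U > 0"
    and V_loc: "Linf_loc M V"
    and V_ge1: "AE x in M. V x \<ge> 1"
    and V_lim: "ess_lim_infinity M p\<^sub>0 V"
    and V_doubling: "doubling_potential M V"
  shows "\<forall>\<epsilon>>0. \<exists>A>0. \<forall>t\<in>{0<..2}.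
           (\<integral>\<^sup>+ x. ennreal (exp (- t * V x)) * indicator {x. V x \<ge> A / t} x \<partial>M)
             \<le> ennreal \<epsilon> * (\<integral>\<^sup>+ x. ennreal (exp (- t * V x)) \<partial>M)"
proof -
  have "V \<in> borel_measurable M" using V_loc unfolding Linf_loc_def by blast
  then show ?thesis using doubling_potential_exp_superlevel_small[OF _ V_doubling] by blast
qed

end
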